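(* Let $\mathcal{C}$ be a peircean bicategory with monoidal product $\otimes$, and define $a\otimes^\bullet b:=\neg(\neg a\otimes\neg b)$. Then for all arrows $c:X\to Y$ and $d:Z\to W$, $c\otimes d\le c\otimes^\bullet d$.
   Context: Composition in diagrammatic order. A cartesian bicategory is a poset-enriched symmetric monoidal category $(\mathcal{C},\otimes,I)$ with, for each $X$, commutative comonoid $(\mathrm{copy}_X,\mathrm{disc}_X)$ and monoid $(\mathrm{cocopy}_X,\mathrm{codisc}_X)$ forming special Frobenius bimonoids, comonoid left adjoint to monoid, every arrow $c$ satisfying $c;\mathrm{copy}\le\mathrm{copy};(c\otimes c)$ and $c;\mathrm{disc}\le\mathrm{disc}$, with standard coherence. A map is an arrow $f$ with $f;\mathrm{copy}=\mathrm{copy};(f\otimes f)$ and $f;\mathrm{disc}=\mathrm{disc}$. A peircean bicategory is a cartesian bicategory whose homsets carry Boolean algebras (with the given order) such that $f;\neg c=\neg(f;c)$ for every map $f:X\to Y$ and arrow $c:Y\to Z$. *)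

theory Defs
  imports Main
begin

text \<open>Composition is written in diagrammatic order: comp f g means "first f, then g"
  and requires cod f = dom g.  Arrows carry their domain and codomain; the
  symmetric monoidal structure is taken to be strict (associators and unitors are
  identities), the symmetry is explicit.\<close>

locale strict_smc =
  fixes arr :: "'a \<Rightarrow> bool"
    and dom :: "'a \<Rightarrow> 'o"
    and cod :: "'a \<Rightarrow> 'o"
    and ident :: "'o \<Rightarrow> 'a"
    and comp :: "'a \<Rightarrow> 'a \<Rightarrow> 'a"
    and otimes :: "'o \<Rightarrow> 'o \<Rightarrow> 'o"
    and unit :: "'o"
    and tens :: "'a \<Rightarrow> 'a \<Rightarrow> 'a"
    and sym :: "'o \<Rightarrow> 'o \<Rightarrow> 'a"
  assumes ident_arr: "arr (ident X)" "dom (ident X) = X" "cod (ident X) = X"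
    and comp_arr: "\<lbrakk>arr f; arr g; cod f = dom g\<rbrakk> \<Longrightarrow>
          arr (comp f g) \<and> dom (comp f g) = dom f \<and> cod (comp f g) = cod g"
    and comp_ident_left: "arr f \<Longrightarrow> comp (ident (dom f)) f = f"
    and comp_ident_right: "arr f \<Longrightarrow> comp f (ident (cod f)) = f"
    and comp_assoc: "\<lbrakk>arr f; arr g; arr h; cod f = dom g; cod g = dom h\<rbrakk> \<Longrightarrow>
          comp (comp f g) h = comp f (comp g h)"
    and otimes_assoc: "otimes (otimes X Y) Z = otimes X (otimes Y Z)"
    and otimes_unit: "otimes unit X = X" "otimes X unit = X"
    and tens_arr: "\<lbrakk>arr f; arr g\<rbrakk> \<Longrightarrow>
          arr (tens f g) \<and> dom (tens f g) = otimes (dom f) (dom g)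
            \<and> cod (tens f g) = otimes (cod f) (cod g)"
    and tens_assoc: "\<lbrakk>arr f; arr g; arr h\<rbrakk> \<Longrightarrow> tens (tens f g) h = tens f (tens g h)"
    and tens_unit: "arr f \<Longrightarrow> tens (ident unit) f = f" "arr f \<Longrightarrow> tens f (ident unit) = f"
    and tens_ident: "tens (ident X) (ident Y) = ident (otimes X Y)"
    and interchange: "\<lbrakk>arr f; arr g; arr h; arr k; cod f = dom g; cod h = dom k\<rbrakk> \<Longrightarrow>
          tens (comp f g) (comp h k) = comp (tens f h) (tens g k)"
    and sym_arr: "arr (sym X Y)" "dom (sym X Y) = otimes X Y" "cod (sym X Y) = otimes Y X"
    and sym_natural: "\<lbrakk>arr f; arr g\<rbrakk> \<Longrightarrow>
          comp (tens f g) (sym (cod f) (cod g)) = comp (sym (dom f) (dom g)) (tens g f)"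
    and sym_inverse: "comp (sym X Y) (sym Y X) = ident (otimes X Y)"
    and sym_hexagon: "sym X (otimes Y Z) = comp (tens (sym X Y) (ident Z)) (tens (ident Y) (sym X Z))"

locale poset_enriched_smc = strict_smc +
  fixes le :: "'a \<Rightarrow> 'a \<Rightarrow> bool"
  assumes le_parallel: "le f g \<Longrightarrow> arr f \<and> arr g \<and> dom f = dom g \<and> cod f = cod g"
    and le_refl: "arr f \<Longrightarrow> le f f"
    and le_trans: "\<lbrakk>le f g; le g h\<rbrakk> \<Longrightarrow> le f h"
    and le_antisym: "\<lbrakk>le f g; le g f\<rbrakk> \<Longrightarrow> f = g"
    and comp_mono: "\<lbrakk>le f f'; le g g'; cod f = dom g\<rbrakk> \<Longrightarrow> le (comp f g) (comp f' g')"
    and tens_mono: "\<lbrakk>le f f'; le g g'\<rbrakk> \<Longrightarrow> le (tens f g) (tens f' g')"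

locale cartesian_bicategory = poset_enriched_smc +
  fixes copy :: "'o \<Rightarrow> 'a"
    and disc :: "'o \<Rightarrow> 'a"
    and cocopy :: "'o \<Rightarrow> 'a"
    and codisc :: "'o \<Rightarrow> 'a"
  assumes copy_arr: "arr (copy X)" "dom (copy X) = X" "cod (copy X) = otimes X X"
    and disc_arr: "arr (disc X)" "dom (disc X) = X" "cod (disc X) = unit"
    and cocopy_arr: "arr (cocopy X)" "dom (cocopy X) = otimes X X" "cod (cocopy X) = X"
    and codisc_arr: "arr (codisc X)" "dom (codisc X) = unit" "cod (codisc X) = X"
    and copy_assoc: "comp (copy X) (tens (copy X) (ident X)) = comp (copy X) (tens (ident X) (copy X))"
    and copy_unit: "comp (copy X) (tens (disc X) (ident X)) = ident X"
    and copy_comm: "comp (copy X) (sym X X) = copy X"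
    and cocopy_assoc: "comp (tens (cocopy X) (ident X)) (cocopy X) = comp (tens (ident X) (cocopy X)) (cocopy X)"
    and cocopy_unit: "comp (tens (codisc X) (ident X)) (cocopy X) = ident X"
    and cocopy_comm: "comp (sym X X) (cocopy X) = cocopy X"
    and frobenius1: "comp (tens (copy X) (ident X)) (tens (ident X) (cocopy X)) = comp (cocopy X) (copy X)"
    and frobenius2: "comp (tens (ident X) (copy X)) (tens (cocopy X) (ident X)) = comp (cocopy X) (copy X)"
    and special: "comp (copy X) (cocopy X) = ident X"
    and copy_adj_unit: "le (ident X) (comp (copy X) (cocopy X))"
    and copy_adj_counit: "le (comp (cocopy X) (copy X)) (ident (otimes X X))"
    and disc_adj_unit: "le (ident X) (comp (disc X) (codisc X))"
    and disc_adj_counit: "le (comp (codisc X) (disc X)) (ident unit)"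
    and lax_copy: "arr c \<Longrightarrow> le (comp c (copy (cod c))) (comp (copy (dom c)) (tens c c))"
    and lax_disc: "arr c \<Longrightarrow> le (comp c (disc (cod c))) (disc (dom c))"
    and copy_otimes: "copy (otimes X Y) =
          comp (tens (copy X) (copy Y)) (tens (tens (ident X) (sym X Y)) (ident Y))"
    and disc_otimes: "disc (otimes X Y) = tens (disc X) (disc Y)"
    and copy_I: "copy unit = ident unit"
    and disc_I: "disc unit = ident unit"
    and cocopy_otimes: "cocopy (otimes X Y) =
          comp (tens (tens (ident X) (sym Y X)) (ident Y)) (tens (cocopy X) (cocopy Y))"
    and codisc_otimes: "codisc (otimes X Y) = tens (codisc X) (codisc Y)"
    and cocopy_I: "cocopy unit = ident unit"
    and codisc_I: "codisc unit = ident unit"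
begin

definition par :: "'a \<Rightarrow> 'a \<Rightarrow> bool" where
  "par f g \<longleftrightarrow> arr f \<and> arr g \<and> dom f = dom g \<and> cod f = cod g"

definition is_map :: "'a \<Rightarrow> bool" where
  "is_map f \<longleftrightarrow> arr f \<and> comp f (copy (cod f)) = comp (copy (dom f)) (tens f f)
      \<and> comp f (disc (cod f)) = disc (dom f)"

end

locale peircean_bicategory_loc = cartesian_bicategory +
  fixes neg and meet and join and top and bot
  assumes neg_arr: "arr c \<Longrightarrow> arr (neg c) \<and> dom (neg c) = dom c \<and> cod (neg c) = cod c"
    and meet_arr: "par f g \<Longrightarrow> arr (meet f g) \<and> dom (meet f g) = dom f \<and> cod (meet f g) = cod f"
    and meet_lower: "par f g \<Longrightarrow> le (meet f g) f" "par f g \<Longrightarrow> le (meet f g) g"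
    and meet_greatest: "\<lbrakk>le h f; le h g\<rbrakk> \<Longrightarrow> le h (meet f g)"
    and join_arr: "par f g \<Longrightarrow> arr (join f g) \<and> dom (join f g) = dom f \<and> cod (join f g) = cod f"
    and join_upper: "par f g \<Longrightarrow> le f (join f g)" "par f g \<Longrightarrow> le g (join f g)"
    and join_least: "\<lbrakk>le f h; le g h\<rbrakk> \<Longrightarrow> le (join f g) h"
    and top_arr: "arr (top X Y)" "dom (top X Y) = X" "cod (top X Y) = Y"
    and top_greatest: "arr f \<Longrightarrow> le f (top (dom f) (cod f))"
    and bot_arr: "arr (bot X Y)" "dom (bot X Y) = X" "cod (bot X Y) = Y"
    and bot_least: "arr f \<Longrightarrow> le (bot (dom f) (cod f)) f"
    and distrib: "\<lbrakk>par f g; par g h\<rbrakk> \<Longrightarrow> meet f (join g h) = join (meet f g) (meet f h)"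
    and neg_meet: "arr f \<Longrightarrow> meet f (neg f) = bot (dom f) (cod f)"
    and neg_join: "arr f \<Longrightarrow> join f (neg f) = top (dom f) (cod f)"
    and map_neg: "\<lbrakk>is_map f; arr c; cod f = dom c\<rbrakk> \<Longrightarrow> comp f (neg c) = neg (comp f c)"

record ('o, 'a) pbicat =
  Arr :: "'a \<Rightarrow> bool"
  Dom :: "'a \<Rightarrow> 'o"
  Cod :: "'a \<Rightarrow> 'o"
  Ident :: "'o \<Rightarrow> 'a"
  Comp :: "'a \<Rightarrow> 'a \<Rightarrow> 'a"
  Otimes :: "'o \<Rightarrow> 'o \<Rightarrow> 'o"
  Unit :: "'o"
  Tens :: "'a \<Rightarrow> 'a \<Rightarrow> 'a"
  Sym :: "'o \<Rightarrow> 'o \<Rightarrow> 'a"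
  Le :: "'a \<Rightarrow> 'a \<Rightarrow> bool"
  Copy :: "'o \<Rightarrow> 'a"
  Disc :: "'o \<Rightarrow> 'a"
  Cocopy :: "'o \<Rightarrow> 'a"
  Codisc :: "'o \<Rightarrow> 'a"
  Neg :: "'a \<Rightarrow> 'a"
  Meet :: "'a \<Rightarrow> 'a \<Rightarrow> 'a"
  Join :: "'a \<Rightarrow> 'a \<Rightarrow> 'a"
  Top :: "'o \<Rightarrow> 'o \<Rightarrow> 'a"
  Bot :: "'o \<Rightarrow> 'o \<Rightarrow> 'a"

definition peircean_bicategory :: "('o, 'a) pbicat \<Rightarrow> bool" where
  "peircean_bicategory C \<longleftrightarrow>
     peircean_bicategory_loc (Arr C) (Dom C) (Cod C) (Ident C) (Comp C) (Otimes C) (Unit C)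
       (Tens C) (Sym C) (Le C) (Copy C) (Disc C) (Cocopy C) (Codisc C)
       (Neg C) (Meet C) (Join C) (Top C) (Bot C)"

definition ptens :: "('o, 'a) pbicat \<Rightarrow> 'a \<Rightarrow> 'a \<Rightarrow> 'a" where
  "ptens C a b = Neg C (Tens C (Neg C a) (Neg C b))"

end

(*
  Since c \<otimes> d \<le> c \<otimes> \<top> and \<not>c \<otimes> \<not>d \<le> \<not>c \<otimes> \<top>, it suffices that c \<otimes> \<top> and \<not>c \<otimes> \<top>
  are disjoint.  Now c \<otimes> \<top> = (id \<otimes> disc); c; (id \<otimes> codisc), and precomposition with the
  left adjoint id \<otimes> disc as well as postcomposition with the right adjoint id \<otimes> codisc
  are right adjoints between hom-posets, so they preserve meets:
  (c \<otimes> \<top>) \<sqinter> (\<not>c \<otimes> \<top>) = (c \<sqinter> \<not>c) \<otimes> \<top> = \<bottom> \<otimes> \<top>.  Finally \<bottom> \<otimes> \<top> = \<bottom>: every bottom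
  arrow factors through disc, because disc is a map and maps commute with negation, and
  \<bottom> \<otimes> codisc is a bottom arrow by compact closure.
*)

theory Submission
  imports Defs
begin

context strict_smc
begin

lemma arr_comp [simp]: "arr f \<Longrightarrow> arr g \<Longrightarrow> cod f = dom g \<Longrightarrow> arr (comp f g)"
  using comp_arr by blast

lemma dom_comp [simp]: "arr f \<Longrightarrow> arr g \<Longrightarrow> cod f = dom g \<Longrightarrow> dom (comp f g) = dom f"
  using comp_arr by blast

lemma cod_comp [simp]: "arr f \<Longrightarrow> arr g \<Longrightarrow> cod f = dom g \<Longrightarrow> cod (comp f g) = cod g"
  using comp_arr by blast

lemma arr_tens [simp]: "arr f \<Longrightarrow> arr g \<Longrightarrow> arr (tens f g)"
  using tens_arr by blast

lemma dom_tens [simp]: "arr f \<Longrightarrow> arr g \<Longrightarrow> dom (tens f g) = otimes (dom f) (dom g)"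
  using tens_arr by blast

lemma cod_tens [simp]: "arr f \<Longrightarrow> arr g \<Longrightarrow> cod (tens f g) = otimes (cod f) (cod g)"
  using tens_arr by blast

lemma comp_ident_arr [simp]: "arr f \<Longrightarrow> dom f = X \<Longrightarrow> comp (ident X) f = f"
  using comp_ident_left by blast

lemma comp_arr_ident [simp]: "arr f \<Longrightarrow> cod f = X \<Longrightarrow> comp f (ident X) = f"
  using comp_ident_right by blast

declare ident_arr [simp] sym_arr [simp] otimes_unit [simp] otimes_assoc [simp]
  tens_unit [simp] tens_ident [simp]

lemma tens_eq_comp_fst_first:
  "arr f \<Longrightarrow> arr g \<Longrightarrow> tens f g = comp (tens f (ident (dom g))) (tens (ident (cod f)) g)"
  using interchange[of f "ident (cod f)" "ident (dom g)" g] by simp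

lemma tens_eq_comp_snd_first:
  "arr f \<Longrightarrow> arr g \<Longrightarrow> tens f g = comp (tens (ident (dom f)) g) (tens f (ident (cod g)))"
  using interchange[of "ident (dom f)" f g "ident (cod g)"] by simp

lemma sym_unit_right: "sym X unit = ident X"
proof -
  have idem: "sym X unit = comp (sym X unit) (sym X unit)"
    using sym_hexagon[of X unit unit] by simp
  have inv: "comp (sym X unit) (sym unit X) = ident X"
    using sym_inverse[of X unit] by simp
  have "sym X unit = comp (sym X unit) (comp (sym X unit) (sym unit X))"
    by (simp add: inv)
  also have "\<dots> = comp (comp (sym X unit) (sym X unit)) (sym unit X)"
    by (simp add: comp_assoc)
  also have "\<dots> = ident X"
    using idem inv by simp
  finally show ?thesis .
qed

end

context poset_enriched_smc
begin

lemmas [trans] = le_trans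

text \<open>l is left adjoint to r; composition is diagrammatic, so the unit is l;r.\<close>

definition adjunction :: "'a \<Rightarrow> 'a \<Rightarrow> bool" where
  "adjunction l r \<longleftrightarrow> arr l \<and> arr r \<and> dom r = cod l \<and> cod r = dom l
     \<and> le (ident (dom l)) (comp l r) \<and> le (comp r l) (ident (cod l))"

lemma adjunction_tens_ident:
  assumes "adjunction l r"
  shows "adjunction (tens (ident X) l) (tens (ident X) r)"
proof -
  have lr: "arr l" "arr r" "dom r = cod l" "cod r = dom l"
    and unit: "le (ident (dom l)) (comp l r)" and counit: "le (comp r l) (ident (cod l))"
    using assms unfolding adjunction_def by auto
  have "ident (otimes X (dom l)) = tens (ident X) (ident (dom l))"
    by simp
  also have "le \<dots> (tens (ident X) (comp l r))"
    by (rule tens_mono[OF le_refl unit]) simp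
  also have "\<dots> = comp (tens (ident X) l) (tens (ident X) r)"
    using interchange[of "ident X" "ident X" l r] lr by simp
  finally have "le (ident (otimes X (dom l))) (comp (tens (ident X) l) (tens (ident X) r))" .
  moreover have "comp (tens (ident X) r) (tens (ident X) l) = tens (ident X) (comp r l)"
    using interchange[of "ident X" "ident X" r l] lr by simp
  moreover have "le (tens (ident X) (comp r l)) (tens (ident X) (ident (cod l)))"
    by (rule tens_mono[OF le_refl counit]) simp
  ultimately show ?thesis
    using lr unfolding adjunction_def by simp
qed

lemma adjunction_le_comp_left_iff:
  assumes "adjunction l r" and "arr f" "arr g" "dom f = dom l" "dom g = cod l" "cod f = cod g"
  shows "le f (comp l g) \<longleftrightarrow> le (comp r f) g"
proof
  have lr: "arr l" "arr r" "dom r = cod l" "cod r = dom l"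
    and unit: "le (ident (dom l)) (comp l r)" and counit: "le (comp r l) (ident (cod l))"
    using assms(1) unfolding adjunction_def by auto
  show "le (comp r f) g" if "le f (comp l g)"
  proof -
    have "le (comp r f) (comp r (comp l g))"
      using comp_mono[OF le_refl that] lr assms by simp
    also have "\<dots> = comp (comp r l) g"
      using lr assms by (simp add: comp_assoc)
    also have "le \<dots> (comp (ident (cod l)) g)"
      using comp_mono[OF counit le_refl] lr assms by simp
    finally show ?thesis
      using assms by simp
  qed
  show "le f (comp l g)" if "le (comp r f) g"
  proof -
    have "le f (comp (comp l r) f)"
      using comp_mono[OF unit le_refl] lr assms by simp
    also have "\<dots> = comp l (comp r f)"
      using lr assms by (simp add: comp_assoc)
    also have "le \<dots> (comp l g)"
      using comp_mono[OF le_refl that] lr assms by simp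
    finally show ?thesis .
  qed
qed

lemma adjunction_le_comp_right_iff:
  assumes "adjunction l r" and "arr f" "arr g" "cod f = dom l" "cod g = cod l" "dom f = dom g"
  shows "le (comp f l) g \<longleftrightarrow> le f (comp g r)"
proof
  have lr: "arr l" "arr r" "dom r = cod l" "cod r = dom l"
    and unit: "le (ident (dom l)) (comp l r)" and counit: "le (comp r l) (ident (cod l))"
    using assms(1) unfolding adjunction_def by auto
  show "le f (comp g r)" if "le (comp f l) g"
  proof -
    have "le f (comp f (comp l r))"
      using comp_mono[OF le_refl unit] lr assms by simp
    also have "\<dots> = comp (comp f l) r"
      using lr assms by (simp add: comp_assoc)
    also have "le \<dots> (comp g r)"
      using comp_mono[OF that le_refl] lr assms by simp
    finally show ?thesis .
  qed
  show "le (comp f l) g" if "le f (comp g r)"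
  proof -
    have "le (comp f l) (comp (comp g r) l)"
      using comp_mono[OF that le_refl] lr assms by simp
    also have "\<dots> = comp g (comp r l)"
      using lr assms by (simp add: comp_assoc)
    also have "le \<dots> (comp g (ident (cod l)))"
      using comp_mono[OF le_refl counit] lr assms by simp
    finally show ?thesis
      using assms by simp
  qed
qed

end

context cartesian_bicategory
begin

declare copy_arr [simp] disc_arr [simp] cocopy_arr [simp] codisc_arr [simp]

lemma adjunction_disc_codisc: "adjunction (disc X) (codisc X)"
  unfolding adjunction_def using disc_adj_unit disc_adj_counit by simp

lemma disc_is_map: "is_map (disc X)"
proof -
  have "tens (disc X) (disc X) = comp (tens (disc X) (ident X)) (disc X)"
    using tens_eq_comp_fst_first[of "disc X" "disc X"] by simp
  then have "comp (copy X) (tens (disc X) (disc X)) = disc X"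
    by (simp add: copy_unit flip: comp_assoc)
  then show ?thesis
    unfolding is_map_def by (simp add: copy_I disc_I)
qed

lemma cocopy_unit_right: "comp (tens (ident X) (codisc X)) (cocopy X) = ident X"
proof -
  have "comp (tens (ident X) (codisc X)) (cocopy X)
      = comp (comp (tens (ident X) (codisc X)) (sym X X)) (cocopy X)"
    by (simp add: cocopy_comm comp_assoc)
  also have "\<dots> = comp (comp (sym X unit) (tens (codisc X) (ident X))) (cocopy X)"
    using sym_natural[of "ident X" "codisc X"] by simp
  also have "\<dots> = ident X"
    by (simp add: sym_unit_right cocopy_unit)
  finally show ?thesis .
qed

definition cup :: "'o \<Rightarrow> 'a" where
  "cup X = comp (codisc X) (copy X)"

definition cap :: "'o \<Rightarrow> 'a" where
  "cap X = comp (cocopy X) (disc X)"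

lemma cup_arr [simp]: "arr (cup X)" "dom (cup X) = unit" "cod (cup X) = otimes X X"
  unfolding cup_def by simp_all

lemma cap_arr [simp]: "arr (cap X)" "dom (cap X) = otimes X X" "cod (cap X) = unit"
  unfolding cap_def by simp_all

lemma snake: "comp (tens (ident X) (cup X)) (tens (cap X) (ident X)) = ident X"
proof -
  have "comp (tens (ident X) (cup X)) (tens (cap X) (ident X))
      = comp (tens (ident X) (codisc X))
          (comp (comp (tens (ident X) (copy X)) (tens (cocopy X) (ident X))) (tens (disc X) (ident X)))"
    unfolding cup_def cap_def
    using interchange[of "ident X" "ident X" "codisc X" "copy X"]
      interchange[of "cocopy X" "disc X" "ident X" "ident X"]
    by (simp add: comp_assoc)
  also have "\<dots> = comp (comp (tens (ident X) (codisc X)) (cocopy X))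
                    (comp (copy X) (tens (disc X) (ident X)))"
    by (simp add: frobenius2 comp_assoc)
  also have "\<dots> = ident X"
    by (simp add: cocopy_unit_right copy_unit)
  finally show ?thesis .
qed

lemma arr_from_unit_is_name:
  assumes g: "arr g" "dom g = unit" "cod g = otimes Y W"
  shows "\<exists>u. arr u \<and> dom u = W \<and> cod u = Y \<and> comp (cup W) (tens u (ident W)) = g"
proof (intro exI conjI)
  define u where "u = comp (tens g (ident W)) (tens (ident Y) (cap W))"
  show u_arr: "arr u" "dom u = W" "cod u = Y"
    unfolding u_def using g by simp_all
  have u_tens: "tens u (ident W) = comp (tens g (ident (otimes W W))) (tens (ident Y) (tens (cap W) (ident W)))"
    unfolding u_def
    using interchange[of "tens g (ident W)" "tens (ident Y) (cap W)" "ident W" "ident W"] g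
    by (simp add: tens_assoc)
  have cup_g: "comp (cup W) (tens g (ident (otimes W W))) = comp g (tens (ident Y) (tens (ident W) (cup W)))"
    using tens_eq_comp_snd_first[of g "cup W"] tens_eq_comp_fst_first[of g "cup W"] g
    by (simp add: tens_assoc flip: tens_ident)
  have "comp (cup W) (tens u (ident W))
      = comp (comp (cup W) (tens g (ident (otimes W W)))) (tens (ident Y) (tens (cap W) (ident W)))"
    unfolding u_tens using g by (simp add: comp_assoc)
  also have "\<dots> = comp g (comp (tens (ident Y) (tens (ident W) (cup W))) (tens (ident Y) (tens (cap W) (ident W))))"
    unfolding cup_g using g by (simp add: comp_assoc)
  also have "\<dots> = comp g (tens (ident Y) (comp (tens (ident W) (cup W)) (tens (cap W) (ident W))))"
    using interchange[of "ident Y" "ident Y" "tens (ident W) (cup W)" "tens (cap W) (ident W)"] by simp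
  also have "\<dots> = g"
    using g by (simp add: snake)
  finally show "comp (cup W) (tens u (ident W)) = g" .
qed

lemma cup_tens_disc_comp:
  assumes f: "arr f" "dom f = unit"
  shows "comp (cup W) (tens (comp (disc W) f) (ident W)) = tens f (codisc W)"
proof -
  have "comp (cup W) (tens (comp (disc W) f) (ident W))
      = comp (codisc W) (comp (comp (copy W) (tens (disc W) (ident W))) (tens f (ident W)))"
    unfolding cup_def using interchange[of "disc W" f "ident W" "ident W"] f
    by (simp add: comp_assoc)
  also have "\<dots> = tens f (codisc W)"
    using tens_eq_comp_snd_first[of f "codisc W"] f by (simp add: copy_unit)
  finally show ?thesis .
qed

end

context peircean_bicategory_loc
begin

declare top_arr [simp] bot_arr [simp]

lemma arr_neg [simp]: "arr f \<Longrightarrow> arr (neg f)"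
  using neg_arr by blast

lemma dom_neg [simp]: "arr f \<Longrightarrow> dom (neg f) = dom f"
  using neg_arr by blast

lemma cod_neg [simp]: "arr f \<Longrightarrow> cod (neg f) = cod f"
  using neg_arr by blast

lemma le_neg_if_meet_le_bot:
  assumes xy: "par x y" and disjoint: "le (meet x y) (bot (dom x) (cod x))"
  shows "le x (neg y)"
proof -
  have arrs: "arr x" "arr y" "dom y = dom x" "cod y = cod x"
    using xy unfolding par_def by auto
  have y_neg: "par y (neg y)"
    using arrs unfolding par_def by simp
  have "le x (meet x (top (dom x) (cod x)))"
    using meet_greatest le_refl top_greatest arrs by metis
  also have "\<dots> = join (meet x y) (meet x (neg y))"
    using neg_join[of y] distrib[OF xy y_neg] arrs by simp
  also have "le \<dots> (neg y)"
  proof (rule join_least)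
    have "le (bot (dom x) (cod x)) (neg y)"
      using bot_least[of "neg y"] arrs by simp
    then show "le (meet x y) (neg y)"
      using le_trans[OF disjoint] by blast
    show "le (meet x (neg y)) (neg y)"
      using meet_lower(2) arrs unfolding par_def by simp
  qed
  finally show ?thesis .
qed

lemma meet_mono:
  assumes "par f g" "le f f'" "le g g'"
  shows "le (meet f g) (meet f' g')"
  using assms meet_greatest meet_lower le_trans by metis

lemma comp_meet_left_adjoint:
  assumes lr: "adjunction l r" and gg': "par g g'" and g: "dom g = cod l"
  shows "comp l (meet g g') = meet (comp l g) (comp l g')"
proof (rule le_antisym)
  have arrs: "arr l" "arr r" "dom r = cod l" "cod r = dom l" "arr g" "arr g'" "dom g' = dom g" "cod g' = cod g"
    using lr gg' unfolding adjunction_def par_def by auto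
  have lg: "par (comp l g) (comp l g')"
    using arrs g unfolding par_def by simp
  have m: "arr (meet g g')" "dom (meet g g') = dom g" "cod (meet g g') = cod g"
    using meet_arr[OF gg'] by simp_all
  have ml: "arr (meet (comp l g) (comp l g'))" "dom (meet (comp l g) (comp l g')) = dom l"
    "cod (meet (comp l g) (comp l g')) = cod g"
    using meet_arr[OF lg] arrs g by simp_all
  show "le (comp l (meet g g')) (meet (comp l g) (comp l g'))"
    using meet_greatest comp_mono[OF le_refl meet_lower(1)[OF gg']] comp_mono[OF le_refl meet_lower(2)[OF gg']]
      arrs g m by simp
  have "le (comp r (meet (comp l g) (comp l g'))) h"
    if "h = g \<or> h = g'" for h
  proof -
    have "le (meet (comp l g) (comp l g')) (comp l h)"
      using meet_lower[OF lg] that by auto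
    then show ?thesis
      using adjunction_le_comp_left_iff[OF lr] ml arrs g that by auto
  qed
  then have "le (comp r (meet (comp l g) (comp l g'))) (meet g g')"
    using meet_greatest by blast
  then show "le (meet (comp l g) (comp l g')) (comp l (meet g g'))"
    using adjunction_le_comp_left_iff[OF lr] ml m arrs g by simp
qed

lemma comp_meet_right_adjoint:
  assumes lr: "adjunction l r" and ff': "par f f'" and f: "cod f = cod l"
  shows "comp (meet f f') r = meet (comp f r) (comp f' r)"
proof (rule le_antisym)
  have arrs: "arr l" "arr r" "dom r = cod l" "cod r = dom l" "arr f" "arr f'" "dom f' = dom f" "cod f' = cod f"
    using lr ff' unfolding adjunction_def par_def by auto
  have fr: "par (comp f r) (comp f' r)"
    using arrs f unfolding par_def by simp
  have m: "arr (meet f f')" "dom (meet f f') = dom f" "cod (meet f f') = cod f"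
    using meet_arr[OF ff'] by simp_all
  have mr: "arr (meet (comp f r) (comp f' r))" "dom (meet (comp f r) (comp f' r)) = dom f"
    "cod (meet (comp f r) (comp f' r)) = dom l"
    using meet_arr[OF fr] arrs f by simp_all
  show "le (comp (meet f f') r) (meet (comp f r) (comp f' r))"
    using meet_greatest comp_mono[OF meet_lower(1)[OF ff'] le_refl] comp_mono[OF meet_lower(2)[OF ff'] le_refl]
      arrs f m by simp
  have "le (comp (meet (comp f r) (comp f' r)) l) h"
    if "h = f \<or> h = f'" for h
  proof -
    have "le (meet (comp f r) (comp f' r)) (comp h r)"
      using meet_lower[OF fr] that by auto
    then show ?thesis
      using adjunction_le_comp_right_iff[OF lr] mr arrs f that by auto
  qed
  then have "le (comp (meet (comp f r) (comp f' r)) l) (meet f f')"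
    using meet_greatest by blast
  then show "le (meet (comp f r) (comp f' r)) (comp (meet f f') r)"
    using adjunction_le_comp_right_iff[OF lr] mr m arrs f by simp
qed

lemma top_eq_disc_codisc: "top X Y = comp (disc X) (codisc Y)"
proof (rule le_antisym)
  have "top X Y = comp (top X Y) (ident Y)"
    by simp
  also have "le \<dots> (comp (top X Y) (comp (disc Y) (codisc Y)))"
    using comp_mono[OF le_refl disc_adj_unit] by simp
  also have "\<dots> = comp (comp (top X Y) (disc Y)) (codisc Y)"
    by (simp add: comp_assoc)
  also have "le \<dots> (comp (disc X) (codisc Y))"
    using comp_mono[OF lax_disc[of "top X Y"] le_refl] by simp
  finally show "le (top X Y) (comp (disc X) (codisc Y))" .
  show "le (comp (disc X) (codisc Y)) (top X Y)"
    using top_greatest[of "comp (disc X) (codisc Y)"] by simp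
qed

lemma neg_top: "neg (top X Y) = bot X Y"
proof -
  have "le (neg (top X Y)) (top X Y)"
    using top_greatest[of "neg (top X Y)"] by simp
  then have "meet (top X Y) (neg (top X Y)) = neg (top X Y)"
    using le_antisym meet_lower(2) meet_greatest le_refl arr_neg top_arr
    unfolding par_def by (metis cod_neg dom_neg)
  then show ?thesis
    using neg_meet[of "top X Y"] by simp
qed

lemma disc_comp_bot: "comp (disc X) (bot unit Y) = bot X Y"
proof -
  have "comp (disc X) (bot unit Y) = neg (comp (disc X) (top unit Y))"
    using map_neg[OF disc_is_map, of "top unit Y"] by (simp flip: neg_top)
  also have "comp (disc X) (top unit Y) = top X Y"
    by (simp add: top_eq_disc_codisc disc_I)
  finally show ?thesis
    by (simp add: neg_top)
qed

text \<open>The left side is the name of the bottom arrow W \<rightarrow> Y, hence below every name, and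
  the right side is a name.\<close>

lemma tens_bot_codisc: "tens (bot unit Y) (codisc W) = bot unit (otimes Y W)"
proof (rule le_antisym)
  obtain u where u: "arr u" "dom u = W" "cod u = Y"
    and name_u: "comp (cup W) (tens u (ident W)) = bot unit (otimes Y W)"
    using arr_from_unit_is_name[of "bot unit (otimes Y W)" Y W] by auto
  have "tens (bot unit Y) (codisc W) = comp (cup W) (tens (bot W Y) (ident W))"
    using cup_tens_disc_comp[of "bot unit Y" W] by (simp add: disc_comp_bot)
  also have "le \<dots> (comp (cup W) (tens u (ident W)))"
  proof -
    have bot_u: "le (bot W Y) u"
      using bot_least[OF u(1)] u by simp
    show ?thesis
      using comp_mono[OF le_refl tens_mono[OF bot_u le_refl]] u by simp
  qed
  finally show "le (tens (bot unit Y) (codisc W)) (bot unit (otimes Y W))"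
    by (simp add: name_u)
  show "le (bot unit (otimes Y W)) (tens (bot unit Y) (codisc W))"
    using bot_least[of "tens (bot unit Y) (codisc W)"] by simp
qed

lemma tens_top_eq_comp:
  assumes "arr f"
  shows "tens f (top Z W) = comp (tens (ident (dom f)) (disc Z)) (comp f (tens (ident (cod f)) (codisc W)))"
proof -
  have "tens f (top Z W) = comp (tens (ident (dom f)) (disc Z)) (tens f (codisc W))"
    unfolding top_eq_disc_codisc using interchange[of "ident (dom f)" f "disc Z" "codisc W"] assms by simp
  also have "tens f (codisc W) = comp f (tens (ident (cod f)) (codisc W))"
    using tens_eq_comp_fst_first[of f "codisc W"] assms by simp
  finally show ?thesis .
qed

lemma meet_tens_top:
  assumes "par f g"
  shows "meet (tens f (top Z W)) (tens g (top Z W)) = tens (meet f g) (top Z W)"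
proof -
  define l where "l = tens (ident (dom f)) (disc Z)"
  define r where "r = tens (ident (cod f)) (codisc W)"
  have adj_l: "adjunction l (tens (ident (dom f)) (codisc Z))"
    and adj_r: "adjunction (tens (ident (cod f)) (disc W)) r"
    unfolding l_def r_def by (simp_all add: adjunction_tens_ident adjunction_disc_codisc)
  have arrs: "arr f" "arr g" "dom g = dom f" "cod g = cod f"
    and m: "arr (meet f g)" "dom (meet f g) = dom f" "cod (meet f g) = cod f"
    using assms meet_arr unfolding par_def by auto
  have fr_gr: "par (comp f r) (comp g r)"
    using arrs unfolding r_def par_def by simp
  have "meet (tens f (top Z W)) (tens g (top Z W)) = meet (comp l (comp f r)) (comp l (comp g r))"
    using tens_top_eq_comp arrs unfolding l_def r_def by simp
  also have "\<dots> = comp l (meet (comp f r) (comp g r))"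
    using comp_meet_left_adjoint[OF adj_l fr_gr] arrs unfolding l_def r_def by simp
  also have "\<dots> = comp l (comp (meet f g) r)"
    using comp_meet_right_adjoint[OF adj_r assms] arrs unfolding r_def by simp
  also have "\<dots> = tens (meet f g) (top Z W)"
    using tens_top_eq_comp[OF m(1)] m unfolding l_def r_def by simp
  finally show ?thesis .
qed

lemma bot_tens_top: "tens (bot X Y) (top Z W) = bot (otimes X Z) (otimes Y W)"
proof -
  have "tens (bot X Y) (top Z W) = tens (comp (disc X) (bot unit Y)) (comp (disc Z) (codisc W))"
    by (simp add: disc_comp_bot top_eq_disc_codisc)
  also have "\<dots> = comp (disc (otimes X Z)) (bot unit (otimes Y W))"
    using interchange[of "disc X" "bot unit Y" "disc Z" "codisc W"] by (simp add: disc_otimes tens_bot_codisc)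
  also have "\<dots> = bot (otimes X Z) (otimes Y W)"
    by (rule disc_comp_bot)
  finally show ?thesis .
qed

lemma tens_le_neg_tens_neg:
  assumes c: "arr c" and d: "arr d"
  shows "le (tens c d) (neg (tens (neg c) (neg d)))"
proof (rule le_neg_if_meet_le_bot)
  show cd: "par (tens c d) (tens (neg c) (neg d))"
    using c d unfolding par_def by simp
  have "le (meet (tens c d) (tens (neg c) (neg d)))
      (meet (tens c (top (dom d) (cod d))) (tens (neg c) (top (dom d) (cod d))))"
    using meet_mono[OF cd] tens_mono le_refl top_greatest c d by (metis arr_neg cod_neg dom_neg)
  also have "\<dots> = bot (dom (tens c d)) (cod (tens c d))"
    using meet_tens_top[of c "neg c"] neg_meet[OF c] bot_tens_top c d unfolding par_def by simp
  finally show "le (meet (tens c d) (tens (neg c) (neg d))) (bot (dom (tens c d)) (cod (tens c d)))" .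
qed

end

theorem lemma70:
  fixes C :: "('o, 'a) pbicat" and c d :: 'a
  assumes "peircean_bicategory C"
    and "Arr C c" and "Arr C d"
  shows "Le C (Tens C c d) (ptens C c d)"
proof -
  interpret peircean_bicategory_loc "Arr C" "Dom C" "Cod C" "Ident C" "Comp C" "Otimes C" "Unit C"
    "Tens C" "Sym C" "Le C" "Copy C" "Disc C" "Cocopy C" "Codisc C"
    "Neg C" "Meet C" "Join C" "Top C" "Bot C"
    using assms(1) unfolding peircean_bicategory_def .
  show ?thesis
    unfolding ptens_def using tens_le_neg_tens_neg[OF assms(2,3)] .
qed

end
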